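(* Let $G$ be a cyclic group of prime order $p$. Suppose $A_{-1}=0,A_0,\dots,A_n,A_{n+1}=0$ are $\mathbb{Z}_p[G]$-modules (finitely generated and free over $\mathbb{Z}_p$) with $\mathbb{Z}_p[G]$-module maps $d:A_i\to A_{i+1}$ and $d^*:A_{i+1}\to A_i$ for all $i$, such that $d^2=0$, $d^{*2}=0$ and $dd^*+d^*d=k$ for a fixed integer $k$ coprime to $p$. Then $[A_0]-[A_1]+[A_2]-\cdots+(-1)^n[A_n]=0$ in $K$.
   Context: $K$ is the free $\mathbb{Q}$-module with basis $[\mathbb{Z}_p]=1,[\mathbb{Z}_p[G]],[I]$ where $I=\ker(\mathbb{Z}_p[G]\to\mathbb{Z}_p)$ (these are the indecomposable $\mathbb{Z}_p[G]$-modules free of finite rank over $\mathbb{Z}_p$), with ring structure induced by direct sum and tensor product; $[A]$ is the class of $A$ given by its decomposition into indecomposables (no relations from non-split exact sequences are imposed). *)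

theory Defs
  imports "HOL-Computational_Algebra.Primes"
begin

text \<open>
  p-adic integers Z_p, realised as the inverse limit of the rings Z/p^l:
  an element is a compatible sequence of canonical residues x l in [0, p^l).
  Ring operations are computed levelwise (reduction mod p^l), which is exactly
  the ring structure of the inverse limit.
\<close>

definition zp :: "nat \<Rightarrow> (nat \<Rightarrow> int) set" where
  "zp p = {x. (\<forall>l. 0 \<le> x l \<and> x l < int p ^ l) \<and> (\<forall>l. x (Suc l) mod int p ^ l = x l)}"

text \<open>Matrices over Z_p: entry (i,j) is a p-adic integer; entries outside the
  declared size are zero (canonical representation).\<close>

type_synonym zpmat = "nat \<Rightarrow> nat \<Rightarrow> nat \<Rightarrow> int"

definition zzero :: "nat \<Rightarrow> int" where "zzero = (\<lambda>_. 0)"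

definition zp_of_int :: "nat \<Rightarrow> int \<Rightarrow> nat \<Rightarrow> int" where
  "zp_of_int p k = (\<lambda>l. k mod int p ^ l)"

definition zp_mat :: "nat \<Rightarrow> nat \<Rightarrow> nat \<Rightarrow> zpmat \<Rightarrow> bool" where
  "zp_mat p m r M \<longleftrightarrow> (\<forall>i j. if i < m \<and> j < r then M i j \<in> zp p else M i j = zzero)"

definition mzero :: zpmat where "mzero = (\<lambda>i j. zzero)"

definition mmul :: "nat \<Rightarrow> nat \<Rightarrow> nat \<Rightarrow> nat \<Rightarrow> zpmat \<Rightarrow> zpmat \<Rightarrow> zpmat" where
  "mmul p m k r M N = (\<lambda>i j. if i < m \<and> j < r
       then (\<lambda>l. (\<Sum>t<k. M i t l * N t j l) mod int p ^ l) else zzero)"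

definition madd :: "nat \<Rightarrow> nat \<Rightarrow> nat \<Rightarrow> zpmat \<Rightarrow> zpmat \<Rightarrow> zpmat" where
  "madd p m r M N = (\<lambda>i j. if i < m \<and> j < r
       then (\<lambda>l. (M i j l + N i j l) mod int p ^ l) else zzero)"

definition mint :: "nat \<Rightarrow> nat \<Rightarrow> int \<Rightarrow> zpmat" where
  "mint p m k = (\<lambda>i j. if i < m \<and> j < m \<and> i = j then zp_of_int p k else zzero)"

fun mpow :: "nat \<Rightarrow> nat \<Rightarrow> zpmat \<Rightarrow> nat \<Rightarrow> zpmat" where
  "mpow p m S 0 = mint p m 1"
| "mpow p m S (Suc e) = mmul p m m m S (mpow p m S e)"

text \<open>
  Z_p[G]-modules that are free of finite rank over Z_p, for G cyclic of order p
  with a fixed generator sigma: the module Z_p^r together with the matrix S of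
  sigma, which must satisfy S^p = 1.
\<close>

definition glat :: "nat \<Rightarrow> nat \<Rightarrow> zpmat \<Rightarrow> bool" where
  "glat p r S \<longleftrightarrow> zp_mat p r r S \<and> mpow p r S p = mint p r 1"

definition gmap :: "nat \<Rightarrow> nat \<Rightarrow> zpmat \<Rightarrow> nat \<Rightarrow> zpmat \<Rightarrow> zpmat \<Rightarrow> bool" where
  "gmap p r S r' S' D \<longleftrightarrow> zp_mat p r' r D \<and> mmul p r' r r D S = mmul p r' r' r S' D"

definition giso :: "nat \<Rightarrow> nat \<Rightarrow> zpmat \<Rightarrow> nat \<Rightarrow> zpmat \<Rightarrow> bool" where
  "giso p r S r' S' \<longleftrightarrow> (\<exists>P Q. gmap p r S r' S' P \<and> gmap p r' S' r S Q \<and>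
       mmul p r r' r Q P = mint p r 1 \<and> mmul p r' r r' P Q = mint p r' 1)"

text \<open>The three indecomposables. Z_p: trivial action.\<close>
definition triv_mat :: "nat \<Rightarrow> zpmat" where "triv_mat p = mint p 1 1"

text \<open>Z_p[G] with basis 1, sigma, ..., sigma^(p-1): sigma permutes the basis cyclically.\<close>
definition reg_mat :: "nat \<Rightarrow> zpmat" where
  "reg_mat p = (\<lambda>i j. if i < p \<and> j < p \<and> i = (j + 1) mod p then zp_of_int p 1 else zzero)"

text \<open>I = ker(Z_p[G] -> Z_p), Z_p-basis e_j = (1 - sigma) sigma^j, j = 0..p-2:
  sigma e_j = e_(j+1) for j < p-2 and sigma e_(p-2) = -(e_0 + ... + e_(p-2)).\<close>
definition aug_mat :: "nat \<Rightarrow> zpmat" where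
  "aug_mat p = (\<lambda>i j. if i < p - 1 \<and> j < p - 1 then
       (if j < p - 2 then (if i = j + 1 then zp_of_int p 1 else zzero) else zp_of_int p (-1))
     else zzero)"

fun bdiag :: "(nat \<times> zpmat) list \<Rightarrow> zpmat" where
  "bdiag [] = mzero"
| "bdiag ((r, M) # Ms) = (\<lambda>i j. if i < r \<and> j < r then M i j
      else if r \<le> i \<and> r \<le> j then bdiag Ms (i - r) (j - r) else zzero)"

definition std_sum :: "nat \<Rightarrow> nat \<Rightarrow> nat \<Rightarrow> nat \<Rightarrow> zpmat" where
  "std_sum p a b c = bdiag (replicate a (1, triv_mat p) @ replicate b (p, reg_mat p)
                           @ replicate c (p - 1, aug_mat p))"

text \<open>(r,S) decomposes as Z_p^a + Z_p[G]^b + I^c, i.e. [A] = a[Z_p] + b[Z_p[G]] + c[I] in K.\<close>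
definition has_class :: "nat \<Rightarrow> nat \<Rightarrow> zpmat \<Rightarrow> nat \<Rightarrow> nat \<Rightarrow> nat \<Rightarrow> bool" where
  "has_class p r S a b c \<longleftrightarrow> r = a + p * b + (p - 1) * c \<and> giso p r S r (std_sum p a b c)"

end

theory Submission
  imports Defs "HOL-Number_Theory.Cong" Complex_Main
begin

text \<open>
  Three invariants of a lattice A with [A] = a [Z_p] + b [Z_p[G]] + c [I] behave additively
  along the complex: the rank a + p b + (p - 1) c, the trace a - c of the generator \<sigma>
  (modulo every p^l), and the number p^(a + b + c) of \<sigma>-fixed vectors of A/pA.
  Each has vanishing alternating sum. For traces, k tr X_i = tr (X_i d d*) + tr (X_i d* d),
  and tr (X_(i+1) d_i d_i*) = tr (X_i d_i* d_i) whenever X commutes with d, so k times the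
  alternating sum telescopes to 0 modulo every p^l, and k is a unit mod p. Modulo p, the
  maps d d* and d* d are complementary idempotents up to the unit k, so the fixed vectors
  in degree i split as ker (d* d) \<times> ker (d d*), and d maps ker (d d*) in degree i
  bijectively onto ker (d* d) in degree i + 1; hence the logarithms of the cardinalities
  telescope. The three linear forms in (a, b, c) are independent.
\<close>

lemma sum_mult_mod_left:
  fixes m :: int
  shows "(\<Sum>t\<in>T. (f t mod m) * g t) mod m = (\<Sum>t\<in>T. f t * g t) mod m"
  by (subst (1 2) mod_sum_eq[symmetric]) (simp add: mod_mult_left_eq)

lemma sum_mult_mod_right:
  fixes m :: int
  shows "(\<Sum>t\<in>T. g t * (f t mod m)) mod m = (\<Sum>t\<in>T. g t * f t) mod m"
  using sum_mult_mod_left[of f m g T] by (simp add: mult.commute)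

lemma sum_lessThan_add:
  fixes f :: "nat \<Rightarrow> 'a::comm_monoid_add"
  shows "(\<Sum>i<m + n. f i) = (\<Sum>i<m. f i) + (\<Sum>i<n. f (m + i))"
  by (induction n) (simp_all add: add.assoc)

lemma alternating_sum_telescope:
  fixes T :: "nat \<Rightarrow> 'a::comm_ring_1"
  shows "(\<Sum>i\<le>n. (-1) ^ i * ((if 0 < i then T (i - 1) else 0) + (if i < n then T i else 0))) = 0"
proof (cases n)
  case (Suc m)
  have "(\<Sum>i\<le>n. (-1) ^ i * (if 0 < i then T (i - 1) else 0)) = - (\<Sum>i\<le>m. (-1) ^ i * T i)"
    unfolding Suc by (subst sum.atMost_Suc_shift) (simp add: sum_negf)
  moreover have "(\<Sum>i\<le>n. (-1) ^ i * (if i < n then T i else 0)) = (\<Sum>i\<le>m. (-1) ^ i * T i)"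
    unfolding Suc by (simp add: sum.atMost_Suc)
  ultimately show ?thesis by (simp add: distrib_left sum.distrib)
qed simp

lemma eq_0_if_powers_dvd_mult:
  fixes k t :: int
  assumes "1 < p" and "coprime k (int p)" and "\<And>l. int p ^ l dvd k * t"
  shows "t = 0"
proof (rule ccontr)
  assume "t \<noteq> 0"
  moreover have "\<not> is_unit (int p)"
    using assms(1) by simp
  ultimately have "finite {l. int p ^ l dvd t}"
    by (rule finite_divisor_powers)
  moreover have "int p ^ l dvd t" for l
    using assms(2,3) by (metis coprime_commute coprime_dvd_mult_right_iff coprime_power_left_iff)
  ultimately show False by simp
qed

section \<open>Matrices over the p-adic integers\<close>

lemma mmul_assoc:
  "mmul p m k r (mmul p m q k A B) C = mmul p m q r A (mmul p q k r B C)"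
proof (intro ext)
  fix i j l
  let ?P = "int p ^ l"
  show "mmul p m k r (mmul p m q k A B) C i j l = mmul p m q r A (mmul p q k r B C) i j l"
  proof (cases "i < m \<and> j < r")
    case True
    have "mmul p m k r (mmul p m q k A B) C i j l
        = (\<Sum>t<k. ((\<Sum>s<q. A i s l * B s t l) mod ?P) * C t j l) mod ?P"
      using True by (simp add: mmul_def)
    also have "\<dots> = (\<Sum>t<k. \<Sum>s<q. A i s l * B s t l * C t j l) mod ?P"
      by (simp add: sum_mult_mod_left sum_distrib_right)
    also have "\<dots> = (\<Sum>s<q. A i s l * (\<Sum>t<k. B s t l * C t j l)) mod ?P"
      by (subst sum.swap) (simp add: sum_distrib_left mult.assoc)
    also have "\<dots> = mmul p m q r A (mmul p q k r B C) i j l"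
      using True by (simp add: mmul_def sum_mult_mod_right)
    finally show ?thesis .
  qed (auto simp: mmul_def)
qed

lemma mmul_mzero_left: "mmul p m q r mzero B = mzero"
  by (simp add: mmul_def mzero_def zzero_def fun_eq_iff)

lemma mmul_mzero_right: "mmul p m q r A mzero = mzero"
  by (simp add: mmul_def mzero_def zzero_def fun_eq_iff)

lemma mint_apply:
  "mint p m c i j l = (if i < m \<and> j < m \<and> i = j then c mod int p ^ l else 0)"
  by (simp add: mint_def zp_of_int_def zzero_def)

lemma sum_mult_mint:
  "j < m \<Longrightarrow> (\<Sum>t<m. f t * mint p m c t j l) = f j * (c mod int p ^ l)"
  by (simp add: mint_apply if_distrib sum.delta cong: conj_cong if_cong)

lemma sum_mint_mult:
  "i < m \<Longrightarrow> (\<Sum>t<m. mint p m c i t l * f t) = f i * (c mod int p ^ l)"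
  by (simp add: mint_apply if_distrib if_distribR sum.delta mult.commute cong: conj_cong if_cong)

lemma mmul_mint_1_commute:
  "mmul p m' m m D (mint p m 1) = mmul p m' m' m (mint p m' 1) D"
  by (simp add: mmul_def sum_mult_mint sum_mint_mult fun_eq_iff)

section \<open>Traces modulo powers of p\<close>

definition mtrace :: "nat \<Rightarrow> nat \<Rightarrow> nat \<Rightarrow> zpmat \<Rightarrow> int" where
  "mtrace p l m M = (\<Sum>i<m. M i i l) mod int p ^ l"

lemma mtrace_mmul_commute:
  "mtrace p l m (mmul p m q m A B) = mtrace p l q (mmul p q m q B A)"
proof -
  let ?P = "int p ^ l"
  have "mtrace p l m (mmul p m q m A B) = (\<Sum>i<m. \<Sum>t<q. A i t l * B t i l) mod ?P"
    by (simp add: mtrace_def mmul_def mod_sum_eq)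
  also have "\<dots> = (\<Sum>t<q. \<Sum>i<m. B t i l * A i t l) mod ?P"
    by (subst sum.swap) (simp add: mult.commute)
  also have "\<dots> = mtrace p l q (mmul p q m q B A)"
    by (simp add: mtrace_def mmul_def mod_sum_eq)
  finally show ?thesis .
qed

lemma mtrace_mmul_mint:
  "mtrace p l m (mmul p m m m X (mint p m c)) = (c * mtrace p l m X) mod int p ^ l"
proof -
  let ?P = "int p ^ l"
  have "mtrace p l m (mmul p m m m X (mint p m c)) = (\<Sum>i<m. X i i l * (c mod ?P)) mod ?P"
    by (simp add: mtrace_def mmul_def sum_mult_mint mod_sum_eq)
  also have "\<dots> = (c * mtrace p l m X) mod ?P"
    by (simp add: mtrace_def sum_mult_mod_right sum_distrib_left mult.commute mod_mult_right_eq)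
  finally show ?thesis .
qed

lemma mtrace_mmul_madd:
  "mtrace p l m (mmul p m m m X (madd p m m Y Z))
   = (mtrace p l m (mmul p m m m X Y) + mtrace p l m (mmul p m m m X Z)) mod int p ^ l"
proof -
  let ?P = "int p ^ l"
  have "mtrace p l m (mmul p m m m X (madd p m m Y Z))
      = (\<Sum>i<m. \<Sum>t<m. X i t l * Y t i l + X i t l * Z t i l) mod ?P"
    by (simp add: mtrace_def mmul_def madd_def mod_sum_eq sum_mult_mod_right distrib_left)
  also have "\<dots> = (mtrace p l m (mmul p m m m X Y) + mtrace p l m (mmul p m m m X Z)) mod ?P"
    by (simp add: mtrace_def mmul_def mod_sum_eq sum.distrib mod_add_eq)
  finally show ?thesis .
qed

lemma mtrace_mmul_mzero: "mtrace p l m (mmul p m m m X mzero) = 0"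
  by (simp only: mmul_mzero_right) (simp add: mtrace_def mzero_def zzero_def)

lemma mtrace_mint: "mtrace p l m (mint p m c) = (int m * c) mod int p ^ l"
  by (simp add: mtrace_def mint_apply mod_mult_right_eq)

lemma mtrace_mint_1_mmul: "mtrace p l m (mmul p m m m (mint p m 1) X) = mtrace p l m X"
  using mtrace_mmul_commute[of p l m m "mint p m 1" X] mtrace_mmul_mint[of p l m X 1]
  by (simp add: mtrace_def)

lemma mtrace_giso:
  assumes "giso p m S m T"
  shows "mtrace p l m S = mtrace p l m T"
proof -
  obtain P Q where "gmap p m S m T P" and QP: "mmul p m m m Q P = mint p m 1"
    and PQ: "mmul p m m m P Q = mint p m 1"
    using assms unfolding giso_def by blast
  then have PS: "mmul p m m m P S = mmul p m m m T P" by (simp add: gmap_def)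
  have "mtrace p l m S = mtrace p l m (mmul p m m m Q (mmul p m m m P S))"
    by (simp add: mmul_assoc[symmetric] QP mtrace_mint_1_mmul)
  also have "\<dots> = mtrace p l m (mmul p m m m P (mmul p m m m Q T))"
    by (simp add: PS mmul_assoc[symmetric] mtrace_mmul_commute[of p l m m _ P])
  also have "\<dots> = mtrace p l m T"
    by (simp add: mmul_assoc[symmetric] PQ mtrace_mint_1_mmul)
  finally show ?thesis .
qed

lemma mtrace_bdiag:
  "mtrace p l (sum_list (map fst L)) (bdiag L) = (\<Sum>(m, M)\<leftarrow>L. mtrace p l m M) mod int p ^ l"
proof (induction L)
  case (Cons mM L)
  obtain m M where mM: "mM = (m, M)" by force
  have "mtrace p l (m + sum_list (map fst L)) (bdiag ((m, M) # L))
      = (mtrace p l m M + mtrace p l (sum_list (map fst L)) (bdiag L)) mod int p ^ l"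
    by (simp add: mtrace_def sum_lessThan_add mod_add_eq)
  with Cons show ?case by (simp add: mM mod_add_right_eq)
qed (simp add: mtrace_def)

lemma mtrace_triv_mat: "mtrace p l 1 (triv_mat p) = 1 mod int p ^ l"
  by (simp add: mtrace_def triv_mat_def mint_apply)

lemma mtrace_reg_mat:
  assumes "1 < p"
  shows "mtrace p l p (reg_mat p) = 0"
proof -
  have "i \<noteq> (i + 1) mod p" if "i < p" for i
    using assms that by (cases "Suc i = p") auto
  then show ?thesis by (simp add: mtrace_def reg_mat_def zzero_def)
qed

lemma mtrace_aug_mat:
  assumes "1 < p"
  shows "mtrace p l (p - 1) (aug_mat p) = -1 mod int p ^ l"
proof -
  have "(\<Sum>i<p - 1. aug_mat p i i l) = (\<Sum>i<p - 1. if i = p - 2 then -1 mod int p ^ l else 0)"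
    by (rule sum.cong) (auto simp: aug_mat_def zzero_def zp_of_int_def)
  with assms show ?thesis by (simp add: mtrace_def)
qed

lemma mtrace_std_sum:
  assumes "1 < p"
  shows "mtrace p l (a + p * b + (p - 1) * c) (std_sum p a b c) = (int a - int c) mod int p ^ l"
proof -
  let ?L = "replicate a (1, triv_mat p) @ replicate b (p, reg_mat p) @ replicate c (p - 1, aug_mat p)"
  have "sum_list (map fst ?L) = a + p * b + (p - 1) * c"
    by (simp add: sum_list_replicate)
  then have "mtrace p l (a + p * b + (p - 1) * c) (std_sum p a b c)
      = (\<Sum>(m, M)\<leftarrow>?L. mtrace p l m M) mod int p ^ l"
    using mtrace_bdiag[of p l ?L] by (simp add: std_sum_def)
  also have "\<dots> = (int a * (1 mod int p ^ l) + int c * (-1 mod int p ^ l)) mod int p ^ l"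
    using assms
    by (simp add: mtrace_triv_mat[simplified] mtrace_reg_mat mtrace_aug_mat[simplified] sum_list_replicate)
  also have "\<dots> = (int a - int c) mod int p ^ l"
    by (subst mod_add_eq[symmetric]) (simp add: mod_mult_right_eq mod_add_eq)
  finally show ?thesis .
qed

lemma mtrace_has_class:
  assumes "1 < p" and "has_class p m S a b c"
  shows "mtrace p l m S = (int a - int c) mod int p ^ l"
proof -
  have "m = a + p * b + (p - 1) * c" and "giso p m S m (std_sum p a b c)"
    using assms(2) unfolding has_class_def by blast+
  then show ?thesis
    using mtrace_giso[of p m S "std_sum p a b c" l] mtrace_std_sum[OF assms(1), of l a b c] by simp
qed

section \<open>Fixed vectors modulo p\<close>

definition vecs :: "nat \<Rightarrow> nat \<Rightarrow> (nat \<Rightarrow> int) set" where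
  "vecs p m = {v. \<forall>j. (j < m \<longrightarrow> v j \<in> {0..<int p}) \<and> (\<not> j < m \<longrightarrow> v j = 0)}"

definition vzero :: "nat \<Rightarrow> int" where
  "vzero = (\<lambda>_. 0)"

definition vadd :: "nat \<Rightarrow> (nat \<Rightarrow> int) \<Rightarrow> (nat \<Rightarrow> int) \<Rightarrow> nat \<Rightarrow> int" where
  "vadd p u w = (\<lambda>j. (u j + w j) mod int p)"

definition vscale :: "nat \<Rightarrow> int \<Rightarrow> (nat \<Rightarrow> int) \<Rightarrow> nat \<Rightarrow> int" where
  "vscale p c v = (\<lambda>j. (c * v j) mod int p)"

text \<open>Vectors of (Z/p)^m are encoded by their canonical residues and are zero beyond m;
  a p-adic matrix acts on them through its entries at level 1, i.e. modulo p.\<close>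

definition mat_vec :: "nat \<Rightarrow> nat \<Rightarrow> nat \<Rightarrow> zpmat \<Rightarrow> (nat \<Rightarrow> int) \<Rightarrow> nat \<Rightarrow> int" where
  "mat_vec p m q M v = (\<lambda>i. if i < m then (\<Sum>j<q. M i j 1 * v j) mod int p else 0)"

definition fixed_vecs :: "nat \<Rightarrow> nat \<Rightarrow> zpmat \<Rightarrow> (nat \<Rightarrow> int) set" where
  "fixed_vecs p m S = {v \<in> vecs p m. mat_vec p m m S v = v}"

lemma finite_vecs: "finite (vecs p m)"
proof -
  have e: "vecs p m = {v. \<forall>j. (j \<in> {..<m} \<longrightarrow> v j \<in> {0..<int p}) \<and> (j \<notin> {..<m} \<longrightarrow> v j = 0)}"
    by (simp add: vecs_def)
  show ?thesis unfolding e by (rule finite_set_of_finite_funs) auto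
qed

lemma finite_fixed_vecs: "finite (fixed_vecs p m S)"
  using finite_vecs by (simp add: fixed_vecs_def)

lemma vecs_mod: "v \<in> vecs p m \<Longrightarrow> v j mod int p = v j"
  by (cases "j < m") (auto simp: vecs_def)

lemma vzero_in_vecs: "0 < p \<Longrightarrow> vzero \<in> vecs p m"
  by (simp add: vecs_def vzero_def)

lemma vadd_in_vecs: "0 < p \<Longrightarrow> u \<in> vecs p m \<Longrightarrow> w \<in> vecs p m \<Longrightarrow> vadd p u w \<in> vecs p m"
  by (simp add: vecs_def vadd_def)

lemma vscale_in_vecs: "0 < p \<Longrightarrow> v \<in> vecs p m \<Longrightarrow> vscale p c v \<in> vecs p m"
  by (simp add: vecs_def vscale_def)

lemma mat_vec_in_vecs: "0 < p \<Longrightarrow> mat_vec p m q M v \<in> vecs p m"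
  by (simp add: vecs_def mat_vec_def)

lemma vadd_vzero: "v \<in> vecs p m \<Longrightarrow> vadd p v vzero = v"
  and vzero_vadd: "v \<in> vecs p m \<Longrightarrow> vadd p vzero v = v"
  by (simp_all add: vadd_def vzero_def vecs_mod fun_eq_iff)

lemma vscale_vzero: "vscale p c vzero = vzero"
  by (simp add: vscale_def vzero_def)

lemma vscale_vadd: "vscale p c (vadd p u w) = vadd p (vscale p c u) (vscale p c w)"
  by (simp add: vadd_def vscale_def mod_add_eq mod_mult_right_eq distrib_left)

lemma vscale_vscale: "vscale p a (vscale p b v) = vscale p (a * b) v"
  by (simp add: vscale_def mod_mult_right_eq mult.assoc)

lemma vscale_cong: "a mod int p = b mod int p \<Longrightarrow> vscale p a v = vscale p b v"
  by (simp add: vscale_def fun_eq_iff) (metis mod_mult_left_eq)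

lemma vscale_1: "v \<in> vecs p m \<Longrightarrow> vscale p 1 v = v"
  by (simp add: vscale_def vecs_mod)

lemma mat_vec_mmul: "mat_vec p m q (mmul p m s q M N) v = mat_vec p m s M (mat_vec p s q N v)"
proof (intro ext)
  fix i
  show "mat_vec p m q (mmul p m s q M N) v i = mat_vec p m s M (mat_vec p s q N v) i"
  proof (cases "i < m")
    case True
    have "mat_vec p m q (mmul p m s q M N) v i
        = (\<Sum>j<q. ((\<Sum>t<s. M i t 1 * N t j 1) mod int p) * v j) mod int p"
      using True by (simp add: mat_vec_def mmul_def)
    also have "\<dots> = (\<Sum>j<q. \<Sum>t<s. M i t 1 * N t j 1 * v j) mod int p"
      by (simp add: sum_mult_mod_left sum_distrib_right)
    also have "\<dots> = (\<Sum>t<s. M i t 1 * (\<Sum>j<q. N t j 1 * v j)) mod int p"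
      by (subst sum.swap) (simp add: sum_distrib_left mult.assoc)
    also have "\<dots> = mat_vec p m s M (mat_vec p s q N v) i"
      using True by (simp add: mat_vec_def sum_mult_mod_right)
    finally show ?thesis .
  qed (simp add: mat_vec_def)
qed

lemma mat_vec_mzero: "mat_vec p m q mzero v = vzero"
  by (simp add: mat_vec_def mzero_def zzero_def vzero_def fun_eq_iff)

lemma mat_vec_vzero: "mat_vec p m q M vzero = vzero"
  by (simp add: mat_vec_def vzero_def fun_eq_iff)

lemma mat_vec_vscale: "mat_vec p m q M (vscale p c v) = vscale p c (mat_vec p m q M v)"
  by (simp add: mat_vec_def vscale_def sum_mult_mod_right mod_mult_right_eq sum_distrib_left
      mult.left_commute fun_eq_iff)

lemma mat_vec_vadd: "mat_vec p m q M (vadd p u w) = vadd p (mat_vec p m q M u) (mat_vec p m q M w)"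
  by (simp add: mat_vec_def vadd_def sum_mult_mod_right mod_add_eq distrib_left sum.distrib
      fun_eq_iff)

lemma mat_vec_madd:
  "mat_vec p m q (madd p m q A B) v = vadd p (mat_vec p m q A v) (mat_vec p m q B v)"
proof -
  have "(\<Sum>j<q. madd p m q A B i j 1 * v j) mod int p
      = (\<Sum>j<q. ((A i j 1 + B i j 1) mod int p) * v j) mod int p" if "i < m" for i
    using that by (simp add: madd_def)
  then show ?thesis
    by (simp add: mat_vec_def vadd_def sum_mult_mod_left mod_add_eq distrib_right sum.distrib
        fun_eq_iff)
qed

lemma mat_vec_mint: "v \<in> vecs p m \<Longrightarrow> mat_vec p m m (mint p m c) v = vscale p c v"
  by (auto simp: mat_vec_def vscale_def sum_mint_mult mod_mult_left_eq vecs_def fun_eq_iff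
      mult.commute[of "v _"])

lemma mat_vec_cong:
  assumes "\<And>j. j < q \<Longrightarrow> v j = v' j"
  shows "mat_vec p m q M v = mat_vec p m q M v'"
proof -
  have "(\<Sum>j<q. M i j 1 * v j) = (\<Sum>j<q. M i j 1 * v' j)" for i
    using assms by (intro sum.cong) simp_all
  then show ?thesis by (simp only: mat_vec_def)
qed

lemma mat_vec_fixed_vecs:
  assumes "0 < p" and "mmul p m' m m D S = mmul p m' m' m S' D" and "v \<in> fixed_vecs p m S"
  shows "mat_vec p m' m D v \<in> fixed_vecs p m' S'"
proof -
  have "mat_vec p m' m' S' (mat_vec p m' m D v) = mat_vec p m' m D (mat_vec p m m S v)"
    by (simp add: mat_vec_mmul[symmetric] assms(2))
  with assms show ?thesis by (simp add: fixed_vecs_def mat_vec_in_vecs)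
qed

lemma fixed_vecs_vadd:
  "0 < p \<Longrightarrow> u \<in> fixed_vecs p m S \<Longrightarrow> w \<in> fixed_vecs p m S \<Longrightarrow> vadd p u w \<in> fixed_vecs p m S"
  by (simp add: fixed_vecs_def vadd_in_vecs mat_vec_vadd)

lemma fixed_vecs_vscale:
  "0 < p \<Longrightarrow> v \<in> fixed_vecs p m S \<Longrightarrow> vscale p c v \<in> fixed_vecs p m S"
  by (simp add: fixed_vecs_def vscale_in_vecs mat_vec_vscale)

lemma vzero_in_fixed_vecs: "0 < p \<Longrightarrow> vzero \<in> fixed_vecs p m S"
  by (simp add: fixed_vecs_def vzero_in_vecs mat_vec_vzero)

lemma card_fixed_vecs_giso:
  assumes "0 < p" and "giso p m S m T"
  shows "card (fixed_vecs p m S) = card (fixed_vecs p m T)"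
proof -
  obtain P Q where P: "gmap p m S m T P" and Q: "gmap p m T m S Q"
    and QP: "mmul p m m m Q P = mint p m 1" and PQ: "mmul p m m m P Q = mint p m 1"
    using assms(2) unfolding giso_def by blast
  have "bij_betw (mat_vec p m m P) (fixed_vecs p m S) (fixed_vecs p m T)"
  proof (rule bij_betw_byWitness[where f'="mat_vec p m m Q"])
    show "\<forall>v\<in>fixed_vecs p m S. mat_vec p m m Q (mat_vec p m m P v) = v"
      by (auto simp: fixed_vecs_def mat_vec_mmul[symmetric] QP mat_vec_mint vscale_1)
    show "\<forall>v\<in>fixed_vecs p m T. mat_vec p m m P (mat_vec p m m Q v) = v"
      by (auto simp: fixed_vecs_def mat_vec_mmul[symmetric] PQ mat_vec_mint vscale_1)
    show "mat_vec p m m P ` fixed_vecs p m S \<subseteq> fixed_vecs p m T"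
      using P assms(1) by (auto simp: gmap_def intro: mat_vec_fixed_vecs)
    show "mat_vec p m m Q ` fixed_vecs p m T \<subseteq> fixed_vecs p m S"
      using Q assms(1) by (auto simp: gmap_def intro: mat_vec_fixed_vecs)
  qed
  then show ?thesis by (rule bij_betw_same_card)
qed

lemma mat_vec_bdiag_Cons:
  "mat_vec p (m + m') (m + m') (bdiag ((m, M) # Ms)) v
   = (\<lambda>i. if i < m then mat_vec p m m M v i
          else if i < m + m' then mat_vec p m' m' (bdiag Ms) (\<lambda>j. v (m + j)) (i - m) else 0)"
proof (intro ext)
  fix i
  let ?B = "bdiag ((m, M) # Ms)"
  have split: "(\<Sum>j<m + m'. ?B i j 1 * v j) = (\<Sum>j<m. ?B i j 1 * v j) + (\<Sum>j<m'. ?B i (m + j) 1 * v (m + j))"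
    by (rule sum_lessThan_add)
  show "mat_vec p (m + m') (m + m') ?B v i = (if i < m then mat_vec p m m M v i
          else if i < m + m' then mat_vec p m' m' (bdiag Ms) (\<lambda>j. v (m + j)) (i - m) else 0)"
    unfolding mat_vec_def split by (cases "i < m") (simp_all add: zzero_def)
qed

lemma fixed_vecs_bdiag_Cons_join:
  assumes "u \<in> fixed_vecs p m M" and "w \<in> fixed_vecs p m' (bdiag Ms)"
  shows "(\<lambda>i. if i < m then u i else w (i - m)) \<in> fixed_vecs p (m + m') (bdiag ((m, M) # Ms))"
proof -
  have "mat_vec p m m M (\<lambda>i. if i < m then u i else w (i - m)) = mat_vec p m m M u"
    by (rule mat_vec_cong) simp
  with assms show ?thesis
    by (auto simp: fixed_vecs_def vecs_def mat_vec_bdiag_Cons fun_eq_iff simp del: bdiag.simps)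
qed

lemma fixed_vecs_bdiag_Cons_split:
  assumes v: "v \<in> fixed_vecs p (m + m') (bdiag ((m, M) # Ms))"
  shows "(\<lambda>i. if i < m then v i else 0) \<in> fixed_vecs p m M"
    and "(\<lambda>j. v (m + j)) \<in> fixed_vecs p m' (bdiag Ms)"
proof -
  have fixed: "mat_vec p (m + m') (m + m') (bdiag ((m, M) # Ms)) v = v" and vec: "v \<in> vecs p (m + m')"
    using v by (simp_all add: fixed_vecs_def)
  have "mat_vec p m m M (\<lambda>i. if i < m then v i else 0) = mat_vec p m m M v"
    by (rule mat_vec_cong) simp
  then have "mat_vec p m m M (\<lambda>i. if i < m then v i else 0) i = (if i < m then v i else 0)" for i
    using fun_cong[OF fixed, of i]
    by (cases "i < m") (simp_all add: mat_vec_bdiag_Cons del: bdiag.simps, simp add: mat_vec_def)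
  with vec show "(\<lambda>i. if i < m then v i else 0) \<in> fixed_vecs p m M"
    by (simp add: fixed_vecs_def vecs_def fun_eq_iff)
  have "mat_vec p m' m' (bdiag Ms) (\<lambda>j. v (m + j)) j = v (m + j)" for j
  proof (cases "j < m'")
    case True
    then show ?thesis
      using fun_cong[OF fixed, of "m + j"] by (simp add: mat_vec_bdiag_Cons del: bdiag.simps)
  next
    case False
    then show ?thesis using vec by (simp add: mat_vec_def vecs_def)
  qed
  with vec show "(\<lambda>j. v (m + j)) \<in> fixed_vecs p m' (bdiag Ms)"
    by (simp add: fixed_vecs_def vecs_def fun_eq_iff)
qed

lemma card_fixed_vecs_bdiag_Cons:
  "card (fixed_vecs p (m + m') (bdiag ((m, M) # Ms)))
   = card (fixed_vecs p m M) * card (fixed_vecs p m' (bdiag Ms))"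
proof -
  let ?join = "\<lambda>(u, w). (\<lambda>i. if i < m then u i else w (i - m)) :: nat \<Rightarrow> int"
  let ?split = "\<lambda>v. ((\<lambda>i. if i < m then v i else 0) :: nat \<Rightarrow> int, \<lambda>j. v (m + j))"
  have "bij_betw ?join (fixed_vecs p m M \<times> fixed_vecs p m' (bdiag Ms))
      (fixed_vecs p (m + m') (bdiag ((m, M) # Ms)))"
  proof (rule bij_betw_byWitness[where f'="?split"])
    show "\<forall>x\<in>fixed_vecs p m M \<times> fixed_vecs p m' (bdiag Ms). ?split (?join x) = x"
      by (auto simp: fixed_vecs_def vecs_def fun_eq_iff)
    show "\<forall>v\<in>fixed_vecs p (m + m') (bdiag ((m, M) # Ms)). ?join (?split v) = v"
      by (auto simp: fun_eq_iff)
    show "?join ` (fixed_vecs p m M \<times> fixed_vecs p m' (bdiag Ms))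
        \<subseteq> fixed_vecs p (m + m') (bdiag ((m, M) # Ms))"
      using fixed_vecs_bdiag_Cons_join by fast
    show "?split ` fixed_vecs p (m + m') (bdiag ((m, M) # Ms))
        \<subseteq> fixed_vecs p m M \<times> fixed_vecs p m' (bdiag Ms)"
      using fixed_vecs_bdiag_Cons_split by fast
  qed
  then have "card (fixed_vecs p m M \<times> fixed_vecs p m' (bdiag Ms))
      = card (fixed_vecs p (m + m') (bdiag ((m, M) # Ms)))"
    by (rule bij_betw_same_card)
  then show ?thesis by (simp add: card_cartesian_product del: bdiag.simps)
qed

lemma card_fixed_vecs_bdiag:
  "card (fixed_vecs p (sum_list (map fst L)) (bdiag L)) = (\<Prod>(m, M)\<leftarrow>L. card (fixed_vecs p m M))"
proof (induction L)
  case Nil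
  have "fixed_vecs p 0 mzero = {vzero}"
    by (auto simp: fixed_vecs_def vecs_def vzero_def mat_vec_def fun_eq_iff)
  then show ?case by simp
next
  case (Cons mM L)
  then show ?case
    using card_fixed_vecs_bdiag_Cons by (cases mM) (simp del: bdiag.simps)
qed

lemma card_fixed_vecs_eq_p:
  assumes "0 < m"
    and param: "\<And>s. s \<in> {0..<int p} \<Longrightarrow> f s \<in> fixed_vecs p m M"
    and param_0: "\<And>s. s \<in> {0..<int p} \<Longrightarrow> f s 0 = s"
    and onto: "\<And>v. v \<in> fixed_vecs p m M \<Longrightarrow> f (v 0) = v"
  shows "card (fixed_vecs p m M) = p"
proof -
  have "bij_betw (\<lambda>v. v 0) (fixed_vecs p m M) {0..<int p}"
  proof (rule bij_betw_byWitness[where f'=f])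
    show "(\<lambda>v. v 0) ` fixed_vecs p m M \<subseteq> {0..<int p}"
      using assms(1) by (auto simp: fixed_vecs_def vecs_def)
    show "\<forall>v\<in>fixed_vecs p m M. f (v 0) = v"
      using onto by simp
    show "\<forall>s\<in>{0..<int p}. f s 0 = s"
      using param_0 by simp
    show "f ` {0..<int p} \<subseteq> fixed_vecs p m M"
      using param by auto
  qed
  then show ?thesis by (simp add: bij_betw_same_card)
qed

lemma card_fixed_vecs_triv_mat: "card (fixed_vecs p 1 (triv_mat p)) = p"
proof (rule card_fixed_vecs_eq_p[where f="\<lambda>s i. if i = 0 then s else 0"])
  have fixed: "fixed_vecs p 1 (triv_mat p) = vecs p 1"
    by (auto simp: fixed_vecs_def triv_mat_def mat_vec_mint vscale_1)
  show "(\<lambda>i. if i = 0 then s else 0) \<in> fixed_vecs p 1 (triv_mat p)" if "s \<in> {0..<int p}" for s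
    using that unfolding fixed by (simp add: vecs_def)
  show "(\<lambda>i. if i = 0 then v 0 else 0) = v" if "v \<in> fixed_vecs p 1 (triv_mat p)" for v
    using that unfolding fixed by (auto simp: vecs_def)
qed simp_all

lemma reg_mat_entry:
  assumes "1 < p" and "i < p" and "j < p"
  shows "reg_mat p i j l = (if j = (i + p - 1) mod p then 1 mod int p ^ l else 0)"
proof -
  have "(i + p - 1) mod p = (if i = 0 then p - 1 else i - 1)"
    using assms by (cases i) simp_all
  moreover have "(j + 1) mod p = (if j + 1 = p then 0 else j + 1)"
    using assms by simp
  ultimately have "i = (j + 1) mod p \<longleftrightarrow> j = (i + p - 1) mod p"
    using assms by auto
  then show ?thesis
    using assms by (simp add: reg_mat_def zp_of_int_def zzero_def)
qed

lemma mat_vec_reg_mat: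
  assumes "1 < p" and "i < p"
  shows "mat_vec p p p (reg_mat p) v i = v ((i + p - 1) mod p) mod int p"
proof -
  have "(\<Sum>j<p. reg_mat p i j 1 * v j) = (\<Sum>j<p. if j = (i + p - 1) mod p then v j else 0)"
    using assms by (intro sum.cong) (simp_all add: reg_mat_entry)
  with assms show ?thesis by (simp add: mat_vec_def)
qed

lemma card_fixed_vecs_reg_mat:
  assumes "1 < p"
  shows "card (fixed_vecs p p (reg_mat p)) = p"
proof (rule card_fixed_vecs_eq_p[where f="\<lambda>s i. if i < p then s else 0"])
  fix v assume v: "v \<in> fixed_vecs p p (reg_mat p)"
  then have vec: "v \<in> vecs p p" and fixed: "mat_vec p p p (reg_mat p) v = v"
    by (simp_all add: fixed_vecs_def)
  have const: "v i = v 0" if "i < p" for i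
    using that
  proof (induction i)
    case (Suc i)
    then have "v (Suc i) = v i mod int p"
      using fun_cong[OF fixed, of "Suc i"] mat_vec_reg_mat[OF assms Suc.prems, of v] by simp
    with Suc show ?case by (simp add: vecs_mod[OF vec])
  qed simp
  show "(\<lambda>i. if i < p then v 0 else 0) = v"
  proof
    fix i
    show "(if i < p then v 0 else 0) = v i"
      using const[of i] vec by (cases "i < p") (simp_all add: vecs_def)
  qed
next
  fix s :: int assume s: "s \<in> {0..<int p}"
  have "mat_vec p p p (reg_mat p) (\<lambda>i. if i < p then s else 0) i = (if i < p then s else 0)" for i
    using s assms by (cases "i < p") (simp_all add: mat_vec_reg_mat, simp add: mat_vec_def)
  with s show "(\<lambda>i. if i < p then s else 0) \<in> fixed_vecs p p (reg_mat p)"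
    by (auto simp: fixed_vecs_def vecs_def)
qed (use assms in simp_all)

lemma mat_vec_aug_mat:
  assumes "1 < p" and "i < p - 1"
  shows "mat_vec p (p - 1) (p - 1) (aug_mat p) v i
     = ((if 0 < i then v (i - 1) else 0) - v (p - 2)) mod int p"
proof -
  have "{..<p - 1} = insert (p - 2) {..<p - 2}"
    using assms by auto
  then have "(\<Sum>j<p - 1. aug_mat p i j 1 * v j)
      = aug_mat p i (p - 2) 1 * v (p - 2) + (\<Sum>j<p - 2. aug_mat p i j 1 * v j)"
    by simp
  also have "(\<Sum>j<p - 2. aug_mat p i j 1 * v j) = (\<Sum>j<p - 2. if j = i - 1 \<and> 0 < i then v j else 0)"
    using assms by (intro sum.cong) (auto simp: aug_mat_def zp_of_int_def zzero_def)
  also have "\<dots> = (if 0 < i then v (i - 1) else 0)"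
    using assms by (auto simp: sum.delta)
  also have "aug_mat p i (p - 2) 1 = -1 mod int p"
    using assms by (simp add: aug_mat_def zp_of_int_def)
  finally have "(\<Sum>j<p - 1. aug_mat p i j 1 * v j) mod int p
      = ((-1 mod int p) * v (p - 2) + (if 0 < i then v (i - 1) else 0)) mod int p"
    by simp
  also have "\<dots> = ((if 0 < i then v (i - 1) else 0) - v (p - 2)) mod int p"
    by (subst mod_add_left_eq[symmetric]) (simp add: mod_mult_left_eq mod_add_left_eq)
  finally show ?thesis
    using assms by (simp add: mat_vec_def)
qed

definition aug_vec :: "nat \<Rightarrow> int \<Rightarrow> nat \<Rightarrow> int" where
  "aug_vec p s = (\<lambda>i. if i < p - 1 then ((int i + 1) * s) mod int p else 0)"

lemma fixed_vecs_aug_mat_eq_aug_vec: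
  assumes "1 < p" and v: "v \<in> fixed_vecs p (p - 1) (aug_mat p)"
  shows "aug_vec p (v 0) = v"
proof -
  have vec: "v \<in> vecs p (p - 1)" and fixed: "mat_vec p (p - 1) (p - 1) (aug_mat p) v = v"
    using v by (simp_all add: fixed_vecs_def)
  have v0: "v 0 = - v (p - 2) mod int p"
    using fun_cong[OF fixed, of 0] mat_vec_aug_mat[OF assms(1), of 0 v] assms(1) by simp
  have lin: "v i = ((int i + 1) * v 0) mod int p" if "i < p - 1" for i
    using that
  proof (induction i)
    case 0
    then show ?case by (simp add: vecs_mod[OF vec])
  next
    case (Suc i)
    have "v (Suc i) = (v i - v (p - 2)) mod int p"
      using fun_cong[OF fixed, of "Suc i"] mat_vec_aug_mat[OF assms(1) Suc.prems, of v] by simp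
    also have "\<dots> = ((int i + 1) * v 0 + v 0) mod int p"
    proof -
      have "v i mod int p = ((int i + 1) * v 0) mod int p" and "- v (p - 2) mod int p = v 0 mod int p"
        using Suc by (simp_all add: v0)
      then show ?thesis using mod_add_cong by fastforce
    qed
    finally show ?case by (simp add: algebra_simps)
  qed
  show ?thesis
  proof
    fix i
    show "aug_vec p (v 0) i = v i"
      using lin[of i] vec by (cases "i < p - 1") (simp_all add: aug_vec_def vecs_def)
  qed
qed

lemma aug_vec_in_fixed_vecs:
  assumes "1 < p" and s: "s \<in> {0..<int p}"
  shows "aug_vec p s \<in> fixed_vecs p (p - 1) (aug_mat p)"
proof -
  have inside: "mat_vec p (p - 1) (p - 1) (aug_mat p) (aug_vec p s) i = aug_vec p s i"
    if "i < p - 1" for i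
  proof -
    have "(if 0 < i then aug_vec p s (i - 1) else 0) mod int p = (int i * s) mod int p"
      using that by (cases i) (simp_all add: aug_vec_def of_nat_diff add.commute)
    moreover have "aug_vec p s (p - 2) mod int p = ((int p - 1) * s) mod int p"
      using assms by (simp add: aug_vec_def of_nat_diff)
    ultimately have "mat_vec p (p - 1) (p - 1) (aug_mat p) (aug_vec p s) i
        = (int i * s - (int p - 1) * s) mod int p"
      unfolding mat_vec_aug_mat[OF assms(1) that] by (rule mod_diff_cong)
    also have "\<dots> = ((int i + 1) * s + (- s) * int p) mod int p"
      by (simp add: algebra_simps)
    also have "\<dots> = aug_vec p s i"
      using that by (simp only: mod_mult_self1) (simp add: aug_vec_def)
    finally show ?thesis .
  qed
  have "mat_vec p (p - 1) (p - 1) (aug_mat p) (aug_vec p s) = aug_vec p s"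
  proof
    fix i
    show "mat_vec p (p - 1) (p - 1) (aug_mat p) (aug_vec p s) i = aug_vec p s i"
      using inside[of i] by (cases "i < p - 1") (simp_all add: mat_vec_def aug_vec_def)
  qed
  moreover have "aug_vec p s \<in> vecs p (p - 1)"
    using s assms by (simp add: aug_vec_def vecs_def)
  ultimately show ?thesis
    by (simp add: fixed_vecs_def)
qed

lemma card_fixed_vecs_aug_mat:
  assumes "1 < p"
  shows "card (fixed_vecs p (p - 1) (aug_mat p)) = p"
proof (rule card_fixed_vecs_eq_p[where f="aug_vec p"])
  show "aug_vec p s \<in> fixed_vecs p (p - 1) (aug_mat p)" if "s \<in> {0..<int p}" for s
    using assms that by (rule aug_vec_in_fixed_vecs)
  show "aug_vec p (v 0) = v" if "v \<in> fixed_vecs p (p - 1) (aug_mat p)" for v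
    using assms that by (rule fixed_vecs_aug_mat_eq_aug_vec)
qed (use assms in \<open>simp_all add: aug_vec_def\<close>)

lemma card_fixed_vecs_std_sum:
  assumes "1 < p"
  shows "card (fixed_vecs p (a + p * b + (p - 1) * c) (std_sum p a b c)) = p ^ (a + b + c)"
proof -
  let ?L = "replicate a (1, triv_mat p) @ replicate b (p, reg_mat p) @ replicate c (p - 1, aug_mat p)"
  have "sum_list (map fst ?L) = a + p * b + (p - 1) * c"
    by (simp add: sum_list_replicate)
  then have "card (fixed_vecs p (a + p * b + (p - 1) * c) (std_sum p a b c))
      = (\<Prod>(m, M)\<leftarrow>?L. card (fixed_vecs p m M))"
    using card_fixed_vecs_bdiag[of p ?L] assms by (simp add: std_sum_def)
  also have "\<dots> = p ^ (a + b + c)"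
    using assms by (simp add: card_fixed_vecs_triv_mat[simplified] card_fixed_vecs_reg_mat
        card_fixed_vecs_aug_mat[simplified] prod_list_replicate power_add)
  finally show ?thesis .
qed

lemma has_class_rank:
  assumes "0 < p" and "has_class p m S a b c"
  shows "int m = int a + int p * int b + (int p - 1) * int c"
  using assms by (simp add: has_class_def of_nat_diff)

lemma card_fixed_vecs_has_class:
  assumes "1 < p" and "has_class p m S a b c"
  shows "card (fixed_vecs p m S) = p ^ (a + b + c)"
proof -
  have "m = a + p * b + (p - 1) * c" and "giso p m S m (std_sum p a b c)"
    using assms(2) unfolding has_class_def by blast+
  then show ?thesis
    using assms(1) card_fixed_vecs_giso[of p m S "std_sum p a b c"] card_fixed_vecs_std_sum[of p a b c]
    by simp
qed

section \<open>Complexes with an invertible homotopy\<close>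

locale homotopy_complex =
  fixes p n :: nat and k :: int and r :: "nat \<Rightarrow> nat" and S d ds :: "nat \<Rightarrow> zpmat"
  assumes p_gt_1: "1 < p"
    and coprime_k: "coprime k (int p)"
    and d_gmap: "\<And>i. i < n \<Longrightarrow> gmap p (r i) (S i) (r (Suc i)) (S (Suc i)) (d i)"
    and ds_gmap: "\<And>i. i < n \<Longrightarrow> gmap p (r (Suc i)) (S (Suc i)) (r i) (S i) (ds i)"
    and d_d: "\<And>i. Suc i < n \<Longrightarrow> mmul p (r (Suc (Suc i))) (r (Suc i)) (r i) (d (Suc i)) (d i) = mzero"
    and ds_ds: "\<And>i. Suc i < n \<Longrightarrow> mmul p (r i) (r (Suc i)) (r (Suc (Suc i))) (ds i) (ds (Suc i)) = mzero"
    and homotopy: "\<And>i. i \<le> n \<Longrightarrow> madd p (r i) (r i)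
            (if 0 < i then mmul p (r i) (r (i - 1)) (r i) (d (i - 1)) (ds (i - 1)) else mzero)
            (if i < n then mmul p (r i) (r (Suc i)) (r i) (ds i) (d i) else mzero)
          = mint p (r i) k"
begin

definition dds :: "nat \<Rightarrow> zpmat" where
  "dds i = (if 0 < i then mmul p (r i) (r (i - 1)) (r i) (d (i - 1)) (ds (i - 1)) else mzero)"

definition dsd :: "nat \<Rightarrow> zpmat" where
  "dsd i = (if i < n then mmul p (r i) (r (Suc i)) (r i) (ds i) (d i) else mzero)"

lemma p_pos: "0 < p"
  using p_gt_1 by simp

lemma madd_dds_dsd: "i \<le> n \<Longrightarrow> madd p (r i) (r i) (dds i) (dsd i) = mint p (r i) k"
  using homotopy by (simp add: dds_def dsd_def)

lemma dds_Suc: "dds (Suc i) = mmul p (r (Suc i)) (r i) (r (Suc i)) (d i) (ds i)"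
  by (simp add: dds_def)

lemma d_commute:
  "i < n \<Longrightarrow> mmul p (r (Suc i)) (r i) (r i) (d i) (S i) = mmul p (r (Suc i)) (r (Suc i)) (r i) (S (Suc i)) (d i)"
  using d_gmap by (simp add: gmap_def)

lemma ds_commute:
  "i < n \<Longrightarrow> mmul p (r i) (r (Suc i)) (r (Suc i)) (ds i) (S (Suc i)) = mmul p (r i) (r i) (r (Suc i)) (S i) (ds i)"
  using ds_gmap by (simp add: gmap_def)

lemma dds_commute:
  "i \<le> n \<Longrightarrow> mmul p (r i) (r i) (r i) (dds i) (S i) = mmul p (r i) (r i) (r i) (S i) (dds i)"
  by (cases i) (simp_all add: dds_def mmul_mzero_left mmul_mzero_right mmul_assoc ds_commute,
      simp add: mmul_assoc[symmetric] d_commute)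

lemma dsd_commute:
  "mmul p (r i) (r i) (r i) (dsd i) (S i) = mmul p (r i) (r i) (r i) (S i) (dsd i)"
  by (simp add: dsd_def mmul_mzero_left mmul_mzero_right mmul_assoc d_commute,
      simp add: mmul_assoc[symmetric] ds_commute)

lemma dsd_mmul_d: "i < n \<Longrightarrow> mmul p (r (Suc i)) (r (Suc i)) (r i) (dsd (Suc i)) (d i) = mzero"
  by (simp add: dsd_def mmul_mzero_left mmul_assoc d_d mmul_mzero_right)

lemma dds_mmul_ds: "i < n \<Longrightarrow> mmul p (r i) (r i) (r (Suc i)) (dds i) (ds i) = mzero"
  by (cases i) (simp_all add: dds_def mmul_mzero_left mmul_assoc ds_ds mmul_mzero_right)

lemma dsd_mmul_dds: "mmul p (r i) (r i) (r i) (dsd i) (dds i) = mzero"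
  by (cases i) (simp_all add: dds_def dsd_def mmul_mzero_left mmul_mzero_right,
      simp add: mmul_assoc[symmetric] mmul_assoc[of _ _ _ _ _ "ds _"] d_d mmul_mzero_left mmul_mzero_right)

lemma dds_mmul_dsd: "mmul p (r i) (r i) (r i) (dds i) (dsd i) = mzero"
  by (cases i) (simp_all add: dds_def dsd_def mmul_mzero_left mmul_mzero_right,
      simp add: mmul_assoc mmul_assoc[of _ _ _ _ _ "ds _", symmetric] ds_ds mmul_mzero_left mmul_mzero_right)

lemma mtrace_dds_Suc:
  assumes "i < n"
    and X: "mmul p (r (Suc i)) (r i) (r i) (d i) (X i) = mmul p (r (Suc i)) (r (Suc i)) (r i) (X (Suc i)) (d i)"
  shows "mtrace p l (r (Suc i)) (mmul p (r (Suc i)) (r (Suc i)) (r (Suc i)) (X (Suc i)) (dds (Suc i)))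
       = mtrace p l (r i) (mmul p (r i) (r i) (r i) (X i) (dsd i))"
proof -
  have "mmul p (r (Suc i)) (r (Suc i)) (r (Suc i)) (X (Suc i)) (dds (Suc i))
      = mmul p (r (Suc i)) (r i) (r (Suc i)) (d i) (mmul p (r i) (r i) (r (Suc i)) (X i) (ds i))"
    by (simp add: dds_Suc mmul_assoc[symmetric] X)
  then show ?thesis
    using assms(1) by (simp add: mtrace_mmul_commute[of p l "r (Suc i)" "r i"] mmul_assoc dsd_def)
qed

lemma mtrace_mult_k:
  assumes "i \<le> n"
  shows "(k * mtrace p l (r i) X) mod int p ^ l
       = (mtrace p l (r i) (mmul p (r i) (r i) (r i) X (dds i))
          + mtrace p l (r i) (mmul p (r i) (r i) (r i) X (dsd i))) mod int p ^ l"
  using mtrace_mmul_madd[of p l "r i" X "dds i" "dsd i"] mtrace_mmul_mint[of p l "r i" X k]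
  by (simp add: madd_dds_dsd[OF assms])

lemma alternating_mtrace_mult_k:
  assumes X: "\<And>i. i < n \<Longrightarrow>
      mmul p (r (Suc i)) (r i) (r i) (d i) (X i) = mmul p (r (Suc i)) (r (Suc i)) (r i) (X (Suc i)) (d i)"
  shows "(k * (\<Sum>i\<le>n. (-1) ^ i * mtrace p l (r i) (X i))) mod int p ^ l = 0"
proof -
  let ?P = "int p ^ l"
  define T where "T i = mtrace p l (r i) (mmul p (r i) (r i) (r i) (X i) (dsd i))" for i
  have each: "(k * mtrace p l (r i) (X i)) mod ?P
      = ((if 0 < i then T (i - 1) else 0) + (if i < n then T i else 0)) mod ?P" if "i \<le> n" for i
  proof -
    have "mtrace p l (r i) (mmul p (r i) (r i) (r i) (X i) (dds i)) = (if 0 < i then T (i - 1) else 0)"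
      using that mtrace_dds_Suc[of "i - 1" X l] X[of "i - 1"]
      by (cases i) (simp_all add: T_def dds_def mtrace_mmul_mzero)
    moreover have "mtrace p l (r i) (mmul p (r i) (r i) (r i) (X i) (dsd i)) = (if i < n then T i else 0)"
      by (simp add: T_def dsd_def mtrace_mmul_mzero)
    ultimately show ?thesis
      using mtrace_mult_k[OF that] by simp
  qed
  have "(k * (\<Sum>i\<le>n. (-1) ^ i * mtrace p l (r i) (X i))) mod ?P
      = (\<Sum>i\<le>n. (-1) ^ i * ((k * mtrace p l (r i) (X i)) mod ?P)) mod ?P"
    by (simp add: sum_distrib_left mult.left_commute sum_mult_mod_right)
  also have "\<dots> = (\<Sum>i\<le>n. (-1) ^ i * (((if 0 < i then T (i - 1) else 0) + (if i < n then T i else 0)) mod ?P)) mod ?P"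
    using each by (intro arg_cong[where f="\<lambda>x. x mod ?P"] sum.cong) simp_all
  also have "\<dots> = 0"
    by (simp add: sum_mult_mod_right alternating_sum_telescope)
  finally show ?thesis .
qed

lemma alternating_trace_sum_eq_0:
  assumes X: "\<And>i. i < n \<Longrightarrow>
      mmul p (r (Suc i)) (r i) (r i) (d i) (X i) = mmul p (r (Suc i)) (r (Suc i)) (r i) (X (Suc i)) (d i)"
    and t: "\<And>i l. i \<le> n \<Longrightarrow> mtrace p l (r i) (X i) = t i mod int p ^ l"
  shows "(\<Sum>i\<le>n. (-1) ^ i * t i) = 0"
proof (rule eq_0_if_powers_dvd_mult[OF p_gt_1 coprime_k])
  fix l
  let ?P = "int p ^ l"
  have "(k * (\<Sum>i\<le>n. (-1) ^ i * t i)) mod ?P = (k * ((\<Sum>i\<le>n. (-1) ^ i * (t i mod ?P)) mod ?P)) mod ?P"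
    by (simp add: mod_mult_right_eq sum_mult_mod_right)
  also have "(\<Sum>i\<le>n. (-1) ^ i * (t i mod ?P)) = (\<Sum>i\<le>n. (-1) ^ i * mtrace p l (r i) (X i))"
    using t by (intro sum.cong) simp_all
  also have "(k * ((\<Sum>i\<le>n. (-1) ^ i * mtrace p l (r i) (X i)) mod ?P)) mod ?P
      = (k * (\<Sum>i\<le>n. (-1) ^ i * mtrace p l (r i) (X i))) mod ?P"
    by (rule mod_mult_right_eq)
  also have "\<dots> = 0"
    by (rule alternating_mtrace_mult_k[OF X])
  finally show "?P dvd k * (\<Sum>i\<le>n. (-1) ^ i * t i)"
    by (simp add: dvd_eq_mod_eq_0)
qed

lemma alternating_rank_sum_eq_0: "(\<Sum>i\<le>n. (-1) ^ i * int (r i)) = 0"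
  by (rule alternating_trace_sum_eq_0[where X="\<lambda>i. mint p (r i) 1"])
    (simp_all add: mmul_mint_1_commute mtrace_mint)

definition kinv :: int where
  "kinv = (SOME u. [k * u = 1] (mod int p))"

lemma vscale_kinv: "v \<in> vecs p m \<Longrightarrow> vscale p kinv (vscale p k v) = v"
proof -
  have "[k * kinv = 1] (mod int p)"
    unfolding kinv_def by (rule someI_ex) (rule cong_solve_coprime_int[OF coprime_k])
  then have "vscale p (kinv * k) v = vscale p 1 v"
    by (intro vscale_cong) (simp add: cong_def mult.commute)
  then show "v \<in> vecs p m \<Longrightarrow> ?thesis"
    by (simp add: vscale_vscale vscale_1)
qed

definition ker_dds :: "nat \<Rightarrow> (nat \<Rightarrow> int) set" where
  "ker_dds i = {v \<in> fixed_vecs p (r i) (S i). mat_vec p (r i) (r i) (dds i) v = vzero}"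

definition ker_dsd :: "nat \<Rightarrow> (nat \<Rightarrow> int) set" where
  "ker_dsd i = {v \<in> fixed_vecs p (r i) (S i). mat_vec p (r i) (r i) (dsd i) v = vzero}"

lemma vadd_dds_dsd:
  "i \<le> n \<Longrightarrow> v \<in> vecs p (r i) \<Longrightarrow>
   vadd p (mat_vec p (r i) (r i) (dds i) v) (mat_vec p (r i) (r i) (dsd i) v) = vscale p k v"
  by (simp add: mat_vec_madd[symmetric] madd_dds_dsd mat_vec_mint)

lemma dds_on_ker_dsd: "i \<le> n \<Longrightarrow> v \<in> ker_dsd i \<Longrightarrow> mat_vec p (r i) (r i) (dds i) v = vscale p k v"
  using vadd_dds_dsd[of i v] vadd_vzero[OF mat_vec_in_vecs[OF p_pos], of "r i" "r i" "dds i" v]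
  by (simp add: ker_dsd_def fixed_vecs_def)

lemma dsd_on_ker_dds: "i \<le> n \<Longrightarrow> v \<in> ker_dds i \<Longrightarrow> mat_vec p (r i) (r i) (dsd i) v = vscale p k v"
  using vadd_dds_dsd[of i v] vzero_vadd[OF mat_vec_in_vecs[OF p_pos], of "r i" "r i" "dsd i" v]
  by (simp add: ker_dds_def fixed_vecs_def)

lemma mat_vec_dds_fixed: "i \<le> n \<Longrightarrow> v \<in> fixed_vecs p (r i) (S i) \<Longrightarrow>
    mat_vec p (r i) (r i) (dds i) v \<in> fixed_vecs p (r i) (S i)"
  by (rule mat_vec_fixed_vecs[OF p_pos dds_commute])

lemma mat_vec_dsd_fixed: "v \<in> fixed_vecs p (r i) (S i) \<Longrightarrow>
    mat_vec p (r i) (r i) (dsd i) v \<in> fixed_vecs p (r i) (S i)"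
  by (rule mat_vec_fixed_vecs[OF p_pos dsd_commute])

definition proj_ker_dsd :: "nat \<Rightarrow> (nat \<Rightarrow> int) \<Rightarrow> nat \<Rightarrow> int" where
  "proj_ker_dsd i v = vscale p kinv (mat_vec p (r i) (r i) (dds i) v)"

definition proj_ker_dds :: "nat \<Rightarrow> (nat \<Rightarrow> int) \<Rightarrow> nat \<Rightarrow> int" where
  "proj_ker_dds i v = vscale p kinv (mat_vec p (r i) (r i) (dsd i) v)"

lemma proj_vadd:
  assumes "i \<le> n" and u: "u \<in> ker_dsd i" and w: "w \<in> ker_dds i"
  shows "proj_ker_dsd i (vadd p u w) = u" and "proj_ker_dds i (vadd p u w) = w"
proof -
  have uv: "u \<in> vecs p (r i)" and wv: "w \<in> vecs p (r i)"
    using u w by (simp_all add: ker_dsd_def ker_dds_def fixed_vecs_def)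
  have "mat_vec p (r i) (r i) (dds i) u = vscale p k u" and "mat_vec p (r i) (r i) (dsd i) w = vscale p k w"
    using dds_on_ker_dsd[OF assms(1) u] dsd_on_ker_dds[OF assms(1) w] by simp_all
  moreover have "mat_vec p (r i) (r i) (dds i) w = vzero" and "mat_vec p (r i) (r i) (dsd i) u = vzero"
    using u w by (simp_all add: ker_dsd_def ker_dds_def)
  ultimately show "proj_ker_dsd i (vadd p u w) = u" and "proj_ker_dds i (vadd p u w) = w"
    using vadd_vzero[OF vscale_in_vecs[OF p_pos uv]] vzero_vadd[OF vscale_in_vecs[OF p_pos wv]]
    by (simp_all add: proj_ker_dsd_def proj_ker_dds_def mat_vec_vadd vscale_kinv[OF uv] vscale_kinv[OF wv])
qed

lemma vadd_proj:
  assumes "i \<le> n" and v: "v \<in> vecs p (r i)"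
  shows "vadd p (proj_ker_dsd i v) (proj_ker_dds i v) = v"
  by (simp add: proj_ker_dsd_def proj_ker_dds_def vscale_vadd[symmetric] vadd_dds_dsd[OF assms]
      vscale_kinv[OF v])

lemma proj_in_ker:
  assumes "i \<le> n" and v: "v \<in> fixed_vecs p (r i) (S i)"
  shows "proj_ker_dsd i v \<in> ker_dsd i" and "proj_ker_dds i v \<in> ker_dds i"
proof -
  have "proj_ker_dsd i v \<in> fixed_vecs p (r i) (S i)" and "proj_ker_dds i v \<in> fixed_vecs p (r i) (S i)"
    using mat_vec_dds_fixed[OF assms] mat_vec_dsd_fixed[OF v]
    by (simp_all add: proj_ker_dsd_def proj_ker_dds_def fixed_vecs_vscale[OF p_pos])
  moreover have "mat_vec p (r i) (r i) (dsd i) (proj_ker_dsd i v) = vzero"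
    and "mat_vec p (r i) (r i) (dds i) (proj_ker_dds i v) = vzero"
    by (simp_all add: proj_ker_dsd_def proj_ker_dds_def mat_vec_vscale mat_vec_mmul[symmetric]
        dsd_mmul_dds dds_mmul_dsd mat_vec_mzero vscale_vzero)
  ultimately show "proj_ker_dsd i v \<in> ker_dsd i" and "proj_ker_dds i v \<in> ker_dds i"
    by (simp_all add: ker_dsd_def ker_dds_def)
qed

lemma card_fixed_vecs_split:
  assumes "i \<le> n"
  shows "card (fixed_vecs p (r i) (S i)) = card (ker_dsd i) * card (ker_dds i)"
proof -
  have "bij_betw (\<lambda>(u, w). vadd p u w) (ker_dsd i \<times> ker_dds i) (fixed_vecs p (r i) (S i))"
  proof (rule bij_betw_byWitness[where f'="\<lambda>v. (proj_ker_dsd i v, proj_ker_dds i v)"])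
    show "\<forall>x\<in>ker_dsd i \<times> ker_dds i. (proj_ker_dsd i (case x of (u, w) \<Rightarrow> vadd p u w),
        proj_ker_dds i (case x of (u, w) \<Rightarrow> vadd p u w)) = x"
      using proj_vadd[OF assms] by auto
    show "\<forall>v\<in>fixed_vecs p (r i) (S i). (case (proj_ker_dsd i v, proj_ker_dds i v) of
        (u, w) \<Rightarrow> vadd p u w) = v"
      using vadd_proj[OF assms] by (simp add: fixed_vecs_def)
    show "(\<lambda>(u, w). vadd p u w) ` (ker_dsd i \<times> ker_dds i) \<subseteq> fixed_vecs p (r i) (S i)"
      by (auto simp: ker_dsd_def ker_dds_def intro: fixed_vecs_vadd[OF p_pos])
    show "(\<lambda>v. (proj_ker_dsd i v, proj_ker_dds i v)) ` fixed_vecs p (r i) (S i) \<subseteq> ker_dsd i \<times> ker_dds i"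
      using proj_in_ker[OF assms] by auto
  qed
  then have "card (ker_dsd i \<times> ker_dds i) = card (fixed_vecs p (r i) (S i))"
    by (rule bij_betw_same_card)
  then show ?thesis
    by (simp add: card_cartesian_product)
qed

lemma card_ker_dds_eq_card_ker_dsd_Suc:
  assumes "i < n"
  shows "card (ker_dds i) = card (ker_dsd (Suc i))"
proof -
  let ?D = "mat_vec p (r (Suc i)) (r i) (d i)" and ?E = "mat_vec p (r i) (r (Suc i)) (ds i)"
  have ED: "?E (?D v) = mat_vec p (r i) (r i) (dsd i) v" for v
    using assms by (simp add: dsd_def mat_vec_mmul)
  have DE: "?D (?E v) = mat_vec p (r (Suc i)) (r (Suc i)) (dds (Suc i)) v" for v
    by (simp add: dds_Suc mat_vec_mmul)
  have "bij_betw ?D (ker_dds i) (ker_dsd (Suc i))"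
  proof (rule bij_betw_byWitness[where f'="\<lambda>u. vscale p kinv (?E u)"])
    show "\<forall>w\<in>ker_dds i. vscale p kinv (?E (?D w)) = w"
      using assms by (auto simp: ED dsd_on_ker_dds ker_dds_def fixed_vecs_def vscale_kinv)
    show "\<forall>u\<in>ker_dsd (Suc i). ?D (vscale p kinv (?E u)) = u"
      using assms by (auto simp: mat_vec_vscale DE dds_on_ker_dsd ker_dsd_def fixed_vecs_def vscale_kinv)
    show "?D ` ker_dds i \<subseteq> ker_dsd (Suc i)"
    proof (rule image_subsetI)
      fix w assume "w \<in> ker_dds i"
      then have "?D w \<in> fixed_vecs p (r (Suc i)) (S (Suc i))"
        using mat_vec_fixed_vecs[OF p_pos d_commute[OF assms]] by (simp add: ker_dds_def)
      moreover have "mat_vec p (r (Suc i)) (r (Suc i)) (dsd (Suc i)) (?D w) = vzero"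
        using assms by (simp add: mat_vec_mmul[symmetric] dsd_mmul_d mat_vec_mzero)
      ultimately show "?D w \<in> ker_dsd (Suc i)"
        by (simp add: ker_dsd_def)
    qed
    show "(\<lambda>u. vscale p kinv (?E u)) ` ker_dsd (Suc i) \<subseteq> ker_dds i"
    proof (rule image_subsetI)
      fix u assume "u \<in> ker_dsd (Suc i)"
      then have "vscale p kinv (?E u) \<in> fixed_vecs p (r i) (S i)"
        using mat_vec_fixed_vecs[OF p_pos ds_commute[OF assms]] by (simp add: ker_dsd_def fixed_vecs_vscale[OF p_pos])
      moreover have "mat_vec p (r i) (r i) (dds i) (vscale p kinv (?E u)) = vzero"
        using assms by (simp add: mat_vec_vscale mat_vec_mmul[symmetric] dds_mmul_ds mat_vec_mzero vscale_vzero)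
      ultimately show "vscale p kinv (?E u) \<in> ker_dds i"
        by (simp add: ker_dds_def)
    qed
  qed
  then show ?thesis
    by (rule bij_betw_same_card)
qed

lemma vzero_in_ker_dsd: "vzero \<in> ker_dsd i"
  and vzero_in_ker_dds: "vzero \<in> ker_dds i"
  by (simp_all add: ker_dsd_def ker_dds_def vzero_in_fixed_vecs[OF p_pos] mat_vec_vzero)

lemma finite_ker_dsd: "finite (ker_dsd i)"
  and finite_ker_dds: "finite (ker_dds i)"
  by (simp_all add: ker_dsd_def ker_dds_def finite_fixed_vecs)

lemma ker_dsd_0: "ker_dsd 0 = {vzero}"
proof -
  have "v = vzero" if "v \<in> ker_dsd 0" for v
  proof -
    have "v \<in> vecs p (r 0)"
      using that by (simp add: ker_dsd_def fixed_vecs_def)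
    moreover have "vscale p k v = vzero"
      using dds_on_ker_dsd[OF _ that] by (simp add: dds_def mat_vec_mzero)
    ultimately show "v = vzero"
      using vscale_kinv by (metis vscale_vzero)
  qed
  then show ?thesis
    using vzero_in_ker_dsd by blast
qed

lemma ker_dds_n: "ker_dds n = {vzero}"
proof -
  have "v = vzero" if "v \<in> ker_dds n" for v
  proof -
    have "v \<in> vecs p (r n)"
      using that by (simp add: ker_dds_def fixed_vecs_def)
    moreover have "vscale p k v = vzero"
      using dsd_on_ker_dds[OF _ that] by (simp add: dsd_def mat_vec_mzero)
    ultimately show "v = vzero"
      using vscale_kinv by (metis vscale_vzero)
  qed
  then show ?thesis
    using vzero_in_ker_dds by blast
qed

lemma alternating_ln_card_fixed_vecs:
  "(\<Sum>i\<le>n. (-1) ^ i * ln (real (card (fixed_vecs p (r i) (S i))))) = 0"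
proof -
  define x where "x i = ln (real (card (ker_dds i)))" for i
  have "ln (real (card (fixed_vecs p (r i) (S i))))
      = (if 0 < i then x (i - 1) else 0) + (if i < n then x i else 0)" if "i \<le> n" for i
  proof -
    have "card (ker_dsd i) > 0" and "card (ker_dds i) > 0"
      using vzero_in_ker_dsd[of i] vzero_in_ker_dds[of i] finite_ker_dsd[of i] finite_ker_dds[of i]
      by (auto simp: card_gt_0_iff)
    then have "ln (real (card (fixed_vecs p (r i) (S i))))
        = ln (real (card (ker_dsd i))) + ln (real (card (ker_dds i)))"
      by (simp add: card_fixed_vecs_split[OF that] ln_mult)
    moreover have "ln (real (card (ker_dsd i))) = (if 0 < i then x (i - 1) else 0)"
      using that by (cases i) (simp_all add: ker_dsd_0 x_def card_ker_dds_eq_card_ker_dsd_Suc)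
    moreover have "ln (real (card (ker_dds i))) = (if i < n then x i else 0)"
      using that by (simp add: ker_dds_n x_def)
    ultimately show ?thesis by simp
  qed
  then have "(\<Sum>i\<le>n. (-1) ^ i * ln (real (card (fixed_vecs p (r i) (S i)))))
      = (\<Sum>i\<le>n. (-1) ^ i * ((if 0 < i then x (i - 1) else 0) + (if i < n then x i else 0)))"
    by simp
  also have "\<dots> = 0"
    by (rule alternating_sum_telescope)
  finally show ?thesis .
qed

lemma alternating_fixed_exponent_sum_eq_0:
  assumes "\<And>i. i \<le> n \<Longrightarrow> card (fixed_vecs p (r i) (S i)) = p ^ e i"
  shows "(\<Sum>i\<le>n. (-1) ^ i * int (e i)) = 0"
proof -
  have "(\<Sum>i\<le>n. (-1) ^ i * real (e i)) * ln (real p) = 0"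
    using alternating_ln_card_fixed_vecs
    by (simp add: assms ln_realpow sum_distrib_right mult.assoc)
  then have "real_of_int (\<Sum>i\<le>n. (-1) ^ i * int (e i)) = 0"
    using p_gt_1 by simp
  then show ?thesis
    by (simp only: of_int_eq_0_iff)
qed


lemma alternating_class_sums_eq_0:
  assumes cls: "\<And>i. i \<le> n \<Longrightarrow> has_class p (r i) (S i) (a i) (b i) (c i)"
  shows "(\<Sum>i\<le>n. (-1) ^ i * (int (a i) - int (c i))) = 0"
    and "(\<Sum>i\<le>n. (-1) ^ i * (int (a i) + int (b i) + int (c i))) = 0"
    and "(\<Sum>i\<le>n. (-1) ^ i * (int (a i) + int p * int (b i) + (int p - 1) * int (c i))) = 0"
proof -
  show "(\<Sum>i\<le>n. (-1) ^ i * (int (a i) - int (c i))) = 0"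
    by (rule alternating_trace_sum_eq_0[where X=S]) (simp_all add: d_commute mtrace_has_class[OF p_gt_1 cls])
  have "(\<Sum>i\<le>n. (-1) ^ i * int (a i + b i + c i)) = 0"
    by (rule alternating_fixed_exponent_sum_eq_0) (simp add: card_fixed_vecs_has_class[OF p_gt_1 cls])
  then show "(\<Sum>i\<le>n. (-1) ^ i * (int (a i) + int (b i) + int (c i))) = 0"
    by simp
  have "(\<Sum>i\<le>n. (-1) ^ i * int (r i))
      = (\<Sum>i\<le>n. (-1) ^ i * (int (a i) + int p * int (b i) + (int p - 1) * int (c i)))"
    by (intro sum.cong refl) (simp add: has_class_rank[OF p_pos cls])
  with alternating_rank_sum_eq_0
  show "(\<Sum>i\<le>n. (-1) ^ i * (int (a i) + int p * int (b i) + (int p - 1) * int (c i))) = 0"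
    by simp
qed
end

theorem lemma2p9:
  fixes p n :: nat and k :: int and r a b c :: "nat \<Rightarrow> nat" and S d ds :: "nat \<Rightarrow> zpmat"
  assumes "prime p" and "coprime k (int p)"
    and "\<forall>i\<le>n. glat p (r i) (S i)"
    and "\<forall>i<n. gmap p (r i) (S i) (r (Suc i)) (S (Suc i)) (d i)"
    and "\<forall>i<n. gmap p (r (Suc i)) (S (Suc i)) (r i) (S i) (ds i)"
    and "\<forall>i. Suc i < n \<longrightarrow> mmul p (r (Suc (Suc i))) (r (Suc i)) (r i) (d (Suc i)) (d i) = mzero"
    and "\<forall>i. Suc i < n \<longrightarrow> mmul p (r i) (r (Suc i)) (r (Suc (Suc i))) (ds i) (ds (Suc i)) = mzero"
    and "\<forall>i\<le>n. madd p (r i) (r i)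
            (if 0 < i then mmul p (r i) (r (i - 1)) (r i) (d (i - 1)) (ds (i - 1)) else mzero)
            (if i < n then mmul p (r i) (r (Suc i)) (r i) (ds i) (d i) else mzero)
          = mint p (r i) k"
    and "\<forall>i\<le>n. has_class p (r i) (S i) (a i) (b i) (c i)"
  shows "(\<Sum>i\<le>n. (-1) ^ i * int (a i)) = 0 \<and> (\<Sum>i\<le>n. (-1) ^ i * int (b i)) = 0
         \<and> (\<Sum>i\<le>n. (-1) ^ i * int (c i)) = 0"
proof -
  have p: "1 < p"
    using assms(1) by (rule prime_gt_1_nat)
  interpret homotopy_complex p n k r S d ds
    using p assms(2,4-8) by unfold_locales auto
  have "has_class p (r i) (S i) (a i) (b i) (c i)" if "i \<le> n" for i
    using assms(9) that by blast
  note sums = alternating_class_sums_eq_0[OF this]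
  define A B C where "A = (\<Sum>i\<le>n. (-1) ^ i * int (a i))" and "B = (\<Sum>i\<le>n. (-1) ^ i * int (b i))"
    and "C = (\<Sum>i\<le>n. (-1) ^ i * int (c i))"
  have "A = C"
    using sums(1) by (simp add: A_def C_def sum_subtractf right_diff_distrib)
  moreover have "A + B + C = 0"
    using sums(2) by (simp add: A_def B_def C_def sum.distrib distrib_left)
  ultimately have "B = - 2 * C"
    by simp
  moreover have "A + int p * B + (int p - 1) * C = 0"
    using sums(3) by (simp add: A_def B_def C_def sum.distrib distrib_left sum_distrib_left mult.left_commute)
  ultimately have "int p * C = 0"
    using \<open>A = C\<close> by (simp add: algebra_simps)
  with p \<open>A = C\<close> \<open>B = - 2 * C\<close> show ?thesis
    by (simp add: A_def B_def C_def)
qed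

end
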